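(* Let $\tau=\tfrac12(1+\sqrt5)$ and $\sigma=\tfrac12(1-\sqrt5)$, and consider the five pairs $(X^{\mathrm{aff}},H_m)\in\{(E_8^=,H_4),(D_6^=,H_3),(D_6^<,H_3),(D_6^>,H_3),(A_4^=,H_2)\}$, with the crystallographic space $V_n$ (where $n=8,6,6,6,4$ respectively), affine root $\alpha_0\in V_n$, projections $\pi_\parallel,\pi_\perp$ and vectors $a_i,\bar a_i$ as described in the context. Put $a_0:=\pi_\parallel(\alpha_0)$ and let $\hat A$ be the $(m+1)\times(m+1)$ matrix $\hat A_{ij}=2\frac{(a_i\mid a_j)}{(a_i\mid a_i)}$, $0\le i,j\le m$ (the induced Cartan matrix). Then in each of the five cases: $a_0\neq 0$; $\hat A_{ii}=2$; every off-diagonal entry of $\hat A$ is a non-positive element of $\mathbb{Q}[\tau]=\{p+q\tau: p,q\in\mathbb{Q}\}$ (and lies in $\mathbb{Z}[\tau]=\{p+q\tau:p,q\in\mathbb{Z}\}$ in the three cases $E_8^=,D_6^=,A_4^=$); $\hat A_{ij}=0$ if and only if $\hat A_{ji}=0$; and $\det\hat A=0$. Thus $\hat A$ is an affine extension of the Cartan matrix of $H_m$ (its lower right $m\times m$ block). Moreover, if $\bar a_0:=\pi_\perp(\alpha_0)$ and $\bar{\hat A}_{ij}=2\frac{(\bar a_i\mid \bar a_j)}{(\bar a_i\mid \bar a_i)}$, then the coefficients of $\bar a_0$ in the basis $\bar a_1,\dots,\bar a_m$ are the Galois conjugates of the coefficients of $a_0$ in the basis $a_1,\dots,a_m$, and $\bar{\hat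 A}$ is the entrywise Galois conjugate of $\hat A$.
   Context: Galois conjugation on $\mathbb{Q}[\tau]$ is the field automorphism $x\mapsto\bar x$ exchanging $\tau$ and $\sigma$ (note $\tau^2=\tau+1$, $\sigma^2=\sigma+1$). Non-crystallographic side ($m\in\{2,3,4\}$): $a_1,\dots,a_m$ are vectors in Euclidean space $\mathbb{R}^m$ with inner product $(\cdot\mid\cdot)$, all with $(a_i\mid a_i)=1$ and with the following other inner products (all unlisted ones are $0$). $H_4$: $(a_1\mid a_2)=(a_2\mid a_3)=-\tfrac12$, $(a_3\mid a_4)=-\tfrac{\tau}{2}$. $H_3$: $(a_1\mid a_2)=-\tfrac12$, $(a_2\mid a_3)=-\tfrac{\tau}{2}$. $H_2$: $(a_1\mid a_2)=-\tfrac{\tau}{2}$. (These are simple roots of the standard representations of $H_4,H_3,H_2$; e.g. for $H_4$ one may take $a_1=\frac12(-\sigma,-\tau,0,-1)$, $a_2=\frac12(0,-\sigma,-\tau,1)$, $a_3=\frac12(0,1,-\sigma,-\tau)$, $a_4=\frac12(0,-1,-\sigma,\tau)$.) The vectors $\bar a_1,\dots,\bar a_m$ are defined in the same way but with every $\tau$ in these inner products replaced by $\sigma$ (simple roots of the non-standard representation). Crystallographic side: $V_n$ is a real vector space with basis $\alpha_1,\dots,\alpha_n$ (simple roots). The Dynkin diagrams are labelled as follows: $A_4$: chain $\alpha_1-\alpha_2-\alpha_3-\alpha_4$; $D_6$: chain $\alpha_1-\alpha_2-\alpha_3-\alpha_4-\alpha_5$ with $\alpha_6$ joined to $\alpha_4$;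 $E_8$: chain $\alpha_1-\cdots-\alpha_7$ with $\alpha_8$ joined to $\alpha_5$. The affine roots are the elements of $V_n$ given by: $E_8^=$: $-\alpha_0=2\alpha_1+3\alpha_2+4\alpha_3+5\alpha_4+6\alpha_5+4\alpha_6+2\alpha_7+3\alpha_8$; $D_6^=$: $-\alpha_0=\alpha_1+2\alpha_2+2\alpha_3+2\alpha_4+\alpha_5+\alpha_6$; $D_6^<$: $-\alpha_0=\alpha_1+\alpha_2+\alpha_3+\alpha_4+\tfrac12\alpha_5+\tfrac12\alpha_6$; $D_6^>$: $-\alpha_0=2\alpha_1+2\alpha_2+2\alpha_3+2\alpha_4+\alpha_5+\alpha_6$; $A_4^=$: $-\alpha_0=\alpha_1+\alpha_2+\alpha_3+\alpha_4$. Projections: $\pi_\parallel:V_n\to\mathbb{R}^m$ is the linear map given on the basis by: for $E_8\to H_4$: $\alpha_1\mapsto a_1$, $\alpha_2\mapsto a_2$, $\alpha_3\mapsto a_3$, $\alpha_4\mapsto\tau a_4$, $\alpha_5\mapsto\tau a_3$, $\alpha_6\mapsto\tau a_2$, $\alpha_7\mapsto\tau a_1$, $\alpha_8\mapsto a_4$; for $D_6\to H_3$: $\alpha_1\mapsto a_1$, $\alpha_2\mapsto a_2$, $\alpha_3\mapsto\tau a_3$, $\alpha_4\mapsto\tau a_2$, $\alpha_5\mapsto\tau a_1$, $\alpha_6\mapsto a_3$; for $A_4\to H_2$: $\alpha_1\mapsto a_1$, $\alpha_2\mapsto\tau a_2$, $\alpha_3\mapsto\tau a_1$, $\alpha_4\mapsto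 a_2$. The projection $\pi_\perp$ is defined by the same formulas with $\tau$ replaced by $\sigma$ and each $a_i$ replaced by $\bar a_i$. *)

theory Defs
  imports "HOL-Analysis.Analysis"
begin

definition tau :: real where "tau = (1 + sqrt 5) / 2"
definition sigma :: real where "sigma = (1 - sqrt 5) / 2"

definition Qtau :: "real set" where
  "Qtau = {x. \<exists>p q :: rat. x = of_rat p + of_rat q * tau}"
definition Ztau :: "real set" where
  "Ztau = {x. \<exists>p q :: int. x = of_int p + of_int q * tau}"

definition galois :: "real \<Rightarrow> real" where
  "galois x = (THE y. \<exists>p q :: rat. x = of_rat p + of_rat q * tau \<and> y = of_rat p + of_rat q * sigma)"

datatype affcase = E8_eq | D6_eq | D6_lt | D6_gt | A4_eq

fun hrank :: "affcase \<Rightarrow> nat" where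
  "hrank E8_eq = 4" | "hrank D6_eq = 3" | "hrank D6_lt = 3" | "hrank D6_gt = 3" | "hrank A4_eq = 2"

fun crank :: "affcase \<Rightarrow> nat" where
  "crank E8_eq = 8" | "crank D6_eq = 6" | "crank D6_lt = 6" | "crank D6_gt = 6" | "crank A4_eq = 4"

text \<open>Gram matrix (a_i | a_j), 1 <= i,j <= m, of the simple roots of H_m, with g = tau
  (standard representation) or g = sigma (non-standard representation).\<close>
definition Hgram :: "nat \<Rightarrow> real \<Rightarrow> nat \<Rightarrow> nat \<Rightarrow> real" where
  "Hgram m g i j =
    (if i = j then 1
     else if m = 4 then
       (if {i,j} = {1,2} \<or> {i,j} = {2,3} then -1/2 else if {i,j} = {3,4} then - g/2 else 0)
     else if m = 3 then
       (if {i,j} = {1,2} then -1/2 else if {i,j} = {2,3} then - g/2 else 0)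
     else if m = 2 then
       (if {i,j} = {1,2} then - g/2 else 0)
     else 0)"

text \<open>Coefficients of -alpha_0 in the basis alpha_1..alpha_n (list entry k is the coefficient of alpha_(k+1)).\<close>
fun negalpha0 :: "affcase \<Rightarrow> real list" where
  "negalpha0 E8_eq = [2,3,4,5,6,4,2,3]"
| "negalpha0 D6_eq = [1,2,2,2,1,1]"
| "negalpha0 D6_lt = [1,1,1,1,1/2,1/2]"
| "negalpha0 D6_gt = [2,2,2,2,1,1]"
| "negalpha0 A4_eq = [1,1,1,1]"

text \<open>Elements of V_n are represented by their coordinate functions (coordinates at 1..n)
  with respect to the simple roots alpha_1..alpha_n.\<close>
definition alpha0 :: "affcase \<Rightarrow> nat \<Rightarrow> real" where
  "alpha0 c j = - (negalpha0 c ! (j - 1))"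

text \<open>Projection table: entry k says alpha_(k+1) maps to (if b then g else 1) * a_i, where (b,i) is the entry.\<close>
fun projtab :: "affcase \<Rightarrow> (bool \<times> nat) list" where
  "projtab E8_eq = [(False,1),(False,2),(False,3),(True,4),(True,3),(True,2),(True,1),(False,4)]"
| "projtab D6_eq = [(False,1),(False,2),(True,3),(True,2),(True,1),(False,3)]"
| "projtab D6_lt = [(False,1),(False,2),(True,3),(True,2),(True,1),(False,3)]"
| "projtab D6_gt = [(False,1),(False,2),(True,3),(True,2),(True,1),(False,3)]"
| "projtab A4_eq = [(False,1),(True,2),(True,1),(False,2)]"

text \<open>The linear projection V_n to R^m determined on the basis by the table; with g = tau and
  the vectors a this is pi_par, with g = sigma and the vectors abar this is pi_perp.\<close>
definition proj :: "affcase \<Rightarrow> real \<Rightarrow> (nat \<Rightarrow> 'v::real_vector) \<Rightarrow> (nat \<Rightarrow> real) \<Rightarrow> 'v" where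
  "proj c g a v = (\<Sum>j = 1..crank c.
      v j *\<^sub>R ((if fst (projtab c ! (j - 1)) then g else 1) *\<^sub>R a (snd (projtab c ! (j - 1)))))"

definition ext_roots :: "affcase \<Rightarrow> real \<Rightarrow> (nat \<Rightarrow> 'v::real_vector) \<Rightarrow> nat \<Rightarrow> 'v" where
  "ext_roots c g a i = (if i = 0 then proj c g a (alpha0 c) else a i)"

definition cartan_hat :: "(nat \<Rightarrow> 'v::real_inner) \<Rightarrow> nat \<Rightarrow> nat \<Rightarrow> real" where
  "cartan_hat b i j = 2 * inner (b i) (b j) / inner (b i) (b i)"

definition det_upto :: "nat \<Rightarrow> (nat \<Rightarrow> nat \<Rightarrow> real) \<Rightarrow> real" where
  "det_upto m M = (\<Sum>p \<in> {p. p permutes {0..m}}. of_int (sign p) * (\<Prod>i\<in>{0..m}. M i (p i)))"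

end

theory Submission
  imports Defs "Jordan_Normal_Form.Determinant"
begin

text \<open>The projected affine root is an explicit combination \<open>a\<^sub>0 = \<Sum>\<^sub>k (p\<^sub>k + q\<^sub>k g) a\<^sub>k\<close>
  with rational \<open>p\<^sub>k, q\<^sub>k\<close>, where \<open>g = \<tau>\<close> for the parallel and \<open>g = \<sigma>\<close> for the perpendicular
  projection. We compute with an arbitrary root \<open>g\<close> of \<open>g\<^sup>2 = g + 1\<close>: the products
  \<open>(a\<^sub>0 | a\<^sub>j)\<close> turn out to be rational, so every entry of the induced Cartan matrix is
  \<open>p + q g\<close> for a rational pair \<open>(p, q)\<close> that does not depend on which root \<open>g\<close> is. This
  gives the Galois statements at once, and the remaining properties become finite checks on the
  table of pairs, using that \<open>1, \<tau>\<close> are linearly independent over \<open>\<rat>\<close>. The determinant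
  vanishes because column 0 is the combination of the other columns with the coefficients of
  \<open>a\<^sub>0\<close>.\<close>

lemma golden_not_rat:
  fixes g :: real
  assumes "g^2 = g + 1"
  shows "g \<notin> \<rat>"
proof
  assume "g \<in> \<rat>"
  then obtain a b :: int where ab: "g = of_int a / of_int b" "b > 0" "coprime a b"
    by (rule Rats_cases')
  have "real_of_int (a^2) = real_of_int (a * b + b^2)"
    using assms ab by (simp add: field_simps power2_eq_square)
  hence eq: "a^2 = a * b + b^2"
    by (simp only: of_int_eq_iff)
  hence "b dvd a^2"
    by (simp add: power2_eq_square)
  hence "is_unit b"
    using coprime_common_divisor[of "a^2" b b] ab(3) by simp
  with ab(2) have "b = 1"
    by simp
  with eq have "a * (a - 1) = 1"
    by (simp add: power2_eq_square algebra_simps)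
  moreover have "even (a * (a - 1))"
    by simp
  ultimately show False
    by simp
qed

lemma tau_squared: "tau^2 = tau + 1"
  by (simp add: tau_def power2_eq_square field_simps)

lemma sigma_squared: "sigma^2 = sigma + 1"
  by (simp add: sigma_def power2_eq_square field_simps)

lemma tau_bounds: "1 < tau" "tau < 2"
proof -
  have "1 < sqrt 5" "sqrt 5 < 3"
    by (simp_all add: real_less_lsqrt)
  then show "1 < tau" "tau < 2"
    by (simp_all add: tau_def)
qed

definition qeval :: "real \<Rightarrow> rat \<times> rat \<Rightarrow> real" where
  "qeval g pq = of_rat (fst pq) + of_rat (snd pq) * g"

lemma qeval_inject:
  assumes "g \<notin> \<rat>"
  shows "qeval g pq = qeval g pq' \<longleftrightarrow> pq = pq'"
proof
  assume eq: "qeval g pq = qeval g pq'"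
  show "pq = pq'"
  proof (cases "snd pq = snd pq'")
    case True
    with eq show ?thesis
      by (simp add: qeval_def prod_eq_iff)
  next
    case False
    with eq have "g = of_rat ((fst pq' - fst pq) / (snd pq - snd pq'))"
      by (simp add: qeval_def of_rat_divide of_rat_diff field_simps)
    with assms show ?thesis
      by (metis Rats_of_rat)
  qed
qed simp

lemma qeval_tau_eq_0_iff: "qeval tau pq = 0 \<longleftrightarrow> pq = (0, 0)"
  using qeval_inject[OF golden_not_rat[OF tau_squared], of pq "(0, 0)"] by (simp add: qeval_def)

lemma qeval_tau_in_Qtau: "qeval tau pq \<in> Qtau"
  by (auto simp: Qtau_def qeval_def)

lemma qeval_tau_in_Ztau:
  assumes "fst pq \<in> \<int>" "snd pq \<in> \<int>"
  shows "qeval tau pq \<in> Ztau"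
proof -
  from assms obtain p q where "fst pq = of_int p" "snd pq = of_int q"
    by (auto elim!: Ints_cases)
  then show ?thesis
    by (auto simp: Ztau_def qeval_def)
qed

lemma galois_qeval_tau: "galois (qeval tau pq) = qeval sigma pq"
  unfolding galois_def
proof (rule the_equality)
  show "\<exists>p q. qeval tau pq = of_rat p + of_rat q * tau \<and> qeval sigma pq = of_rat p + of_rat q * sigma"
    by (auto simp: qeval_def)
next
  fix y
  assume "\<exists>p q. qeval tau pq = of_rat p + of_rat q * tau \<and> y = of_rat p + of_rat q * sigma"
  then obtain p q where "qeval tau pq = qeval tau (p, q)" "y = qeval sigma (p, q)"
    by (auto simp: qeval_def)
  with qeval_inject[OF golden_not_rat[OF tau_squared]] show "y = qeval sigma pq"
    by simp
qed

lemma det_upto_eq_det: "det_upto m M = det (mat (Suc m) (Suc m) (\<lambda>(i, j). M i j))"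
proof -
  let ?A = "mat (Suc m) (Suc m) (\<lambda>(i, j). M i j)"
  have "det ?A = (\<Sum>p | p permutes {0..<Suc m}.
      of_int (sign p) * (\<Prod>i = 0..<Suc m. ?A $$ (i, p i)))"
    by (rule det_def') simp
  also have "\<dots> = det_upto m M"
    unfolding det_upto_def atLeastLessThanSuc_atLeastAtMost
  proof (intro sum.cong prod.cong refl arg_cong2[where f = "(*)"])
    fix p i
    assume "p \<in> {p. p permutes {0..m}}" "i \<in> {0..m}"
    then have "p i \<le> m"
      using permutes_in_image[of p "{0..m}" i] by simp
    with \<open>i \<in> {0..m}\<close> show "?A $$ (i, p i) = M i (p i)"
      by simp
  qed
  finally show ?thesis ..
qed

lemma det_upto_eq_0_if_col_0_combination:
  fixes M :: "nat \<Rightarrow> nat \<Rightarrow> real"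
  assumes col: "\<And>i. i \<le> m \<Longrightarrow> M i 0 = (\<Sum>k = 1..m. x k * M i k)"
  shows "det_upto m M = 0"
proof -
  let ?A = "mat (Suc m) (Suc m) (\<lambda>(i, j). M i j)"
  let ?v = "vec (Suc m) (\<lambda>k. if k = 0 then -1 else x k)"
  have split_0: "{0..<Suc m} = insert 0 {1..m}"
    by auto
  have "?A *\<^sub>v ?v = 0\<^sub>v (Suc m)"
  proof (rule eq_vecI)
    fix i
    assume "i < dim_vec (0\<^sub>v (Suc m))"
    then have i: "i \<le> m"
      by simp
    have "vec_index (?A *\<^sub>v ?v) i = (\<Sum>k \<in> {0..<Suc m}. M i k * (if k = 0 then -1 else x k))"
      using i by (simp add: scalar_prod_def)
    also have "\<dots> = - M i 0 + (\<Sum>k = 1..m. x k * M i k)"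
      by (simp add: split_0 mult.commute)
    also have "\<dots> = 0"
      using col[OF i] by simp
    finally show "vec_index (?A *\<^sub>v ?v) i = vec_index (0\<^sub>v (Suc m)) i"
      using i by simp
  qed simp
  moreover have "?v \<noteq> 0\<^sub>v (Suc m)"
  proof
    assume "?v = 0\<^sub>v (Suc m)"
    then have "vec_index ?v 0 = vec_index (0\<^sub>v (Suc m)) 0"
      by simp
    then show False
      by simp
  qed
  ultimately have "det ?A = 0"
    by (meson det_0_iff_vec_prod_zero mat_carrier vec_carrier)
  then show ?thesis
    by (simp add: det_upto_eq_det)
qed

lemma det_upto_cartan_hat_eq_0:
  fixes b :: "nat \<Rightarrow> 'v::real_inner"
  assumes "b 0 = (\<Sum>k = 1..m. x k *\<^sub>R b k)"
  shows "det_upto m (cartan_hat b) = 0"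
proof (rule det_upto_eq_0_if_col_0_combination)
  fix i
  have "cartan_hat b i 0 = 2 * (\<Sum>k = 1..m. x k * inner (b i) (b k)) / inner (b i) (b i)"
    by (simp add: cartan_hat_def assms inner_sum_right)
  also have "\<dots> = (\<Sum>k = 1..m. x k * cartan_hat b i k)"
    by (simp add: cartan_hat_def sum_distrib_left sum_divide_distrib algebra_simps)
  finally show "cartan_hat b i 0 = (\<Sum>k = 1..m. x k * cartan_hat b i k)" .
qed

fun a0_coeffs :: "affcase \<Rightarrow> (rat \<times> rat) list" where
  "a0_coeffs E8_eq = [(-2,-2), (-3,-4), (-4,-6), (-3,-5)]"
| "a0_coeffs D6_eq = [(-1,-1), (-2,-2), (-1,-2)]"
| "a0_coeffs D6_lt = [(-1,-1/2), (-1,-1), (-1/2,-1)]"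
| "a0_coeffs D6_gt = [(-2,-1), (-2,-2), (-1,-2)]"
| "a0_coeffs A4_eq = [(-1,-1), (-1,-1)]"

fun a0_inner :: "affcase \<Rightarrow> rat list" where
  "a0_inner E8_eq = [-1/2, 0, 0, 0]"
| "a0_inner D6_eq = [0, -1/2, 0]"
| "a0_inner D6_lt = [-1/2, 0, 0]"
| "a0_inner D6_gt = [-1, 0, 0]"
| "a0_inner A4_eq = [-1/2, -1/2]"

definition a0_sqnorm :: "affcase \<Rightarrow> real \<Rightarrow> real" where
  "a0_sqnorm c g =
    (\<Sum>k = 1..hrank c. qeval g (a0_coeffs c ! (k - 1)) * of_rat (a0_inner c ! (k - 1)))"

lemma proj_alpha0_eq:
  "proj c g a (alpha0 c) = (\<Sum>k = 1..hrank c. qeval g (a0_coeffs c ! (k - 1)) *\<^sub>R a k)"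
  by (cases c) (simp_all add: proj_def alpha0_def qeval_def numeral_eq_Suc atLeastAtMostSuc_conv
      of_rat_divide of_rat_minus algebra_simps)

lemma det_upto_cartan_hat_ext_roots: "det_upto (hrank c) (cartan_hat (ext_roots c g a)) = 0"
  by (rule det_upto_cartan_hat_eq_0[where x = "\<lambda>k. qeval g (a0_coeffs c ! (k - 1))"])
    (simp add: ext_roots_def proj_alpha0_eq)

lemma inner_proj_alpha0:
  fixes a :: "nat \<Rightarrow> 'v::real_inner"
  assumes g: "g^2 = g + 1"
    and gram: "\<forall>i\<in>{1..hrank c}. \<forall>j\<in>{1..hrank c}. inner (a i) (a j) = Hgram (hrank c) g i j"
    and j: "j \<in> {1..hrank c}"
  shows "inner (proj c g a (alpha0 c)) (a j) = of_rat (a0_inner c ! (j - 1))"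
proof -
  have "inner (proj c g a (alpha0 c)) (a j)
      = (\<Sum>k = 1..hrank c. qeval g (a0_coeffs c ! (k - 1)) * Hgram (hrank c) g k j)"
    using gram j by (simp add: proj_alpha0_eq inner_sum_left)
  also have "\<dots> = of_rat (a0_inner c ! (j - 1))"
    using j g by (cases c) (auto simp: numeral_eq_Suc atLeastAtMostSuc_conv Hgram_def qeval_def
        doubleton_eq_iff of_rat_divide of_rat_minus power2_eq_square algebra_simps divide_simps)
  finally show ?thesis .
qed

lemma inner_proj_alpha0_self:
  fixes a :: "nat \<Rightarrow> 'v::real_inner"
  assumes "g^2 = g + 1"
    and "\<forall>i\<in>{1..hrank c}. \<forall>j\<in>{1..hrank c}. inner (a i) (a j) = Hgram (hrank c) g i j"
  shows "inner (proj c g a (alpha0 c)) (proj c g a (alpha0 c)) = a0_sqnorm c g"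
  by (subst (2) proj_alpha0_eq) (simp add: inner_sum_right inner_proj_alpha0[OF assms] a0_sqnorm_def)

lemma proj_alpha0_nonzero:
  fixes a :: "nat \<Rightarrow> 'v::real_inner"
  assumes "g^2 = g + 1"
    and "\<forall>i\<in>{1..hrank c}. \<forall>j\<in>{1..hrank c}. inner (a i) (a j) = Hgram (hrank c) g i j"
  shows "proj c g a (alpha0 c) \<noteq> 0"
proof
  assume "proj c g a (alpha0 c) = 0"
  with inner_proj_alpha0[OF assms] have "\<forall>j\<in>{1..hrank c}. a0_inner c ! (j - 1) = 0"
    by simp
  moreover have "\<exists>j\<in>{1..hrank c}. a0_inner c ! (j - 1) \<noteq> 0"
    by (cases c) (simp_all add: numeral_eq_Suc atLeastAtMostSuc_conv)
  ultimately show False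
    by blast
qed

fun cartan_table :: "affcase \<Rightarrow> (rat \<times> rat) list list" where
  "cartan_table E8_eq =
    [[(2,0),(-2,1),(0,0),(0,0),(0,0)],
     [(-1,0),(2,0),(-1,0),(0,0),(0,0)],
     [(0,0),(-1,0),(2,0),(-1,0),(0,0)],
     [(0,0),(0,0),(-1,0),(2,0),(0,-1)],
     [(0,0),(0,0),(0,0),(0,-1),(2,0)]]"
| "cartan_table D6_eq =
    [[(2,0),(0,0),(-2,1),(0,0)],
     [(0,0),(2,0),(-1,0),(0,0)],
     [(-1,0),(-1,0),(2,0),(0,-1)],
     [(0,0),(0,0),(0,-1),(2,0)]]"
| "cartan_table D6_lt =
    [[(2,0),(-12/5,4/5),(0,0),(0,0)],
     [(-1,0),(2,0),(-1,0),(0,0)],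
     [(0,0),(-1,0),(2,0),(0,-1)],
     [(0,0),(0,0),(0,-1),(2,0)]]"
| "cartan_table D6_gt =
    [[(2,0),(-6/5,2/5),(0,0),(0,0)],
     [(-2,0),(2,0),(-1,0),(0,0)],
     [(0,0),(-1,0),(2,0),(0,-1)],
     [(0,0),(0,0),(0,-1),(2,0)]]"
| "cartan_table A4_eq =
    [[(2,0),(-2,1),(-2,1)],
     [(-1,0),(2,0),(0,-1)],
     [(-1,0),(0,-1),(2,0)]]"

lemma cartan_hat_ext_roots_eq_table:
  fixes a :: "nat \<Rightarrow> 'v::real_inner"
  assumes g: "g^2 = g + 1"
    and gram: "\<forall>i\<in>{1..hrank c}. \<forall>j\<in>{1..hrank c}. inner (a i) (a j) = Hgram (hrank c) g i j"
    and ij: "i \<le> hrank c" "j \<le> hrank c"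
  shows "cartan_hat (ext_roots c g a) i j = qeval g (cartan_table c ! i ! j)"
proof -
  let ?a0 = "proj c g a (alpha0 c)"
  let ?r = "\<lambda>j. of_rat (a0_inner c ! (j - 1)) :: real"
  have a0_a: "inner ?a0 (a j) = ?r j" and a_a0: "inner (a j) ?a0 = ?r j"
    if "j \<in> {1..hrank c}" for j
    using inner_proj_alpha0[OF g gram that] by (simp_all add: inner_commute)
  have N: "a0_sqnorm c g \<noteq> 0"
    using proj_alpha0_nonzero[OF g gram] inner_proj_alpha0_self[OF g gram] by force
  have "cartan_hat (ext_roots c g a) i j =
      (if i = 0 then (if j = 0 then 2 else 2 * ?r j / a0_sqnorm c g)
       else if j = 0 then 2 * ?r i else 2 * Hgram (hrank c) g i j)"
    using ij gram N
    by (auto simp: cartan_hat_def ext_roots_def a0_a a_a0 inner_proj_alpha0_self[OF g gram] Hgram_def)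
  also have "\<dots> = qeval g (cartan_table c ! i ! j)"
    using ij g N
    by (cases c; simp only: hrank.simps eval_nat_numeral le_Suc_eq le_0_eq BitM.simps; elim disjE;
        simp add: Hgram_def doubleton_eq_iff qeval_def of_rat_divide of_rat_minus field_simps;
        simp add: a0_sqnorm_def qeval_def numeral_eq_Suc atLeastAtMostSuc_conv
          of_rat_divide of_rat_minus algebra_simps)
  finally show ?thesis .
qed

lemma cartan_table_diag: "i \<le> hrank c \<Longrightarrow> qeval g (cartan_table c ! i ! i) = 2"
  by (cases c) (auto simp: le_Suc_eq numeral_eq_Suc qeval_def)

lemma cartan_table_offdiag_nonpos:
  "i \<le> hrank c \<Longrightarrow> j \<le> hrank c \<Longrightarrow> i \<noteq> j \<Longrightarrow> qeval tau (cartan_table c ! i ! j) \<le> 0"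
  using tau_bounds
  by (cases c) (auto simp: le_Suc_eq numeral_eq_Suc qeval_def of_rat_divide of_rat_minus)

lemma cartan_table_Ints:
  "c \<in> {E8_eq, D6_eq, A4_eq} \<Longrightarrow> i \<le> hrank c \<Longrightarrow> j \<le> hrank c \<Longrightarrow>
    fst (cartan_table c ! i ! j) \<in> \<int> \<and> snd (cartan_table c ! i ! j) \<in> \<int>"
  by (auto simp: le_Suc_eq numeral_eq_Suc)

lemma cartan_table_zero_sym:
  "i \<le> hrank c \<Longrightarrow> j \<le> hrank c \<Longrightarrow>
    cartan_table c ! i ! j = (0, 0) \<longleftrightarrow> cartan_table c ! j ! i = (0, 0)"
  by (cases c) (auto simp: le_Suc_eq numeral_eq_Suc)

theorem mainTheorem1:
  fixes c :: affcase and a abar :: "nat \<Rightarrow> 'v::euclidean_space"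
  assumes "DIM('v) = hrank c"
    and "\<forall>i\<in>{1..hrank c}. \<forall>j\<in>{1..hrank c}. inner (a i) (a j) = Hgram (hrank c) tau i j"
    and "\<forall>i\<in>{1..hrank c}. \<forall>j\<in>{1..hrank c}. inner (abar i) (abar j) = Hgram (hrank c) sigma i j"
  shows "proj c tau a (alpha0 c) \<noteq> 0
    \<and> (\<forall>i\<le>hrank c. cartan_hat (ext_roots c tau a) i i = 2)
    \<and> (\<forall>i\<le>hrank c. \<forall>j\<le>hrank c. i \<noteq> j \<longrightarrow>
          cartan_hat (ext_roots c tau a) i j \<le> 0
        \<and> cartan_hat (ext_roots c tau a) i j \<in> Qtau
        \<and> (c \<in> {E8_eq, D6_eq, A4_eq} \<longrightarrow> cartan_hat (ext_roots c tau a) i j \<in> Ztau))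
    \<and> (\<forall>i\<le>hrank c. \<forall>j\<le>hrank c.
          cartan_hat (ext_roots c tau a) i j = 0 \<longleftrightarrow> cartan_hat (ext_roots c tau a) j i = 0)
    \<and> det_upto (hrank c) (cartan_hat (ext_roots c tau a)) = 0
    \<and> (\<exists>x y. proj c tau a (alpha0 c) = (\<Sum>i = 1..hrank c. x i *\<^sub>R a i)
           \<and> proj c sigma abar (alpha0 c) = (\<Sum>i = 1..hrank c. y i *\<^sub>R abar i)
           \<and> (\<forall>i\<in>{1..hrank c}. x i \<in> Qtau \<and> y i = galois (x i)))
    \<and> (\<forall>i\<le>hrank c. \<forall>j\<le>hrank c.
          cartan_hat (ext_roots c sigma abar) i j = galois (cartan_hat (ext_roots c tau a) i j))"
proof -
  note cartan_tau = cartan_hat_ext_roots_eq_table[OF tau_squared assms(2)]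
  note cartan_sigma = cartan_hat_ext_roots_eq_table[OF sigma_squared assms(3)]
  have coeffs: "\<exists>x y. proj c tau a (alpha0 c) = (\<Sum>i = 1..hrank c. x i *\<^sub>R a i)
           \<and> proj c sigma abar (alpha0 c) = (\<Sum>i = 1..hrank c. y i *\<^sub>R abar i)
           \<and> (\<forall>i\<in>{1..hrank c}. x i \<in> Qtau \<and> y i = galois (x i))"
    by (intro exI[of _ "\<lambda>k. qeval tau (a0_coeffs c ! (k - 1))"]
        exI[of _ "\<lambda>k. qeval sigma (a0_coeffs c ! (k - 1))"])
      (simp add: proj_alpha0_eq qeval_tau_in_Qtau galois_qeval_tau)
  show ?thesis
    using proj_alpha0_nonzero[OF tau_squared assms(2)] det_upto_cartan_hat_ext_roots coeffs
      cartan_table_diag cartan_table_offdiag_nonpos cartan_table_Ints cartan_table_zero_sym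
    by (simp add: cartan_tau cartan_sigma qeval_tau_in_Qtau qeval_tau_in_Ztau qeval_tau_eq_0_iff
        galois_qeval_tau)
qed

end
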